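(* Let $(S,\Delta,\mathbb{P})$ be a probability space, $(U,d)$ a separable metric space, $\mathfrak{X}$ the set of $U$-valued random variables on $S$, $\mathcal{I}$ an ideal on $\mathbb{N}$ with $\mathbb{N}\notin\mathcal{I}$, and $\{X_n\}_{n\in\mathbb{N}}$ a sequence in $\mathfrak{X}$ which is $\mathcal{I}$-convergent in probability to $X_*\in\mathfrak{X}$ (i.e. $\{n:\mathbb{P}(d(X_n,X_* )>\varepsilon)>\delta\}\in\mathcal{I}$ for all $\varepsilon,\delta>0$). Then for every $r\geq 0$, $$\bar{\theta}_r(X_* )\subseteq \mathcal{I}^{\mathbb{P}}\text{-}LIM^rX_i\subseteq \bar{B}_r(X_* ),$$ where $\bar{\theta}_r(X_* )=\{Y\in\mathfrak{X}:\mathbb{P}(d(X_*,Y)\geq r)=0\}$ and $\bar{B}_r(X_* )=\{Y\in\mathfrak{X}:\rho(X_*,Y)\leq r\}$.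
   Context: The Ky Fan metric is $\rho(X,Y)=\inf\{\varepsilon>0:\mathbb{P}(d(X,Y)>\varepsilon)\leq\varepsilon\}$. An ideal on $\mathbb{N}$ is a family $\mathcal{I}\subseteq\mathcal{P}(\mathbb{N})$ with $\varnothing\in\mathcal{I}$, closed under finite unions and under subsets. A sequence $\{X_n\}$ in $\mathfrak{X}$ is rough $\mathcal{I}$-convergent in probability to $Y\in\mathfrak{X}$ with degree of roughness $r$ if $\{n\in\mathbb{N}:\mathbb{P}(d(X_n,Y)>r+\varepsilon)>\delta\}\in\mathcal{I}$ for every $\varepsilon,\delta>0$; $\mathcal{I}^{\mathbb{P}}\text{-}LIM^rX_i$ denotes the set of all such $Y$. *)

theory Defs
  imports "HOL-Probability.Probability"
begin

definition ideal_on_nat :: "nat set set \<Rightarrow> bool" where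
  "ideal_on_nat I \<longleftrightarrow> {} \<in> I \<and> (\<forall>A\<in>I. \<forall>B\<in>I. A \<union> B \<in> I) \<and> (\<forall>A\<in>I. \<forall>B. B \<subseteq> A \<longrightarrow> B \<in> I)"

definition rvs :: "'a measure \<Rightarrow> ('a \<Rightarrow> 'b::metric_space) set" where
  "rvs M = borel_measurable M"

definition ky_fan :: "'a measure \<Rightarrow> ('a \<Rightarrow> 'b::metric_space) \<Rightarrow> ('a \<Rightarrow> 'b) \<Rightarrow> real" where
  "ky_fan M X Y = Inf {e. e > 0 \<and> measure M {s \<in> space M. dist (X s) (Y s) > e} \<le> e}"

definition rough_I_conv_prob ::
  "'a measure \<Rightarrow> nat set set \<Rightarrow> (nat \<Rightarrow> 'a \<Rightarrow> 'b::metric_space) \<Rightarrow> real \<Rightarrow> ('a \<Rightarrow> 'b) \<Rightarrow> bool" where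
  "rough_I_conv_prob M I X r Y \<longleftrightarrow>
     (\<forall>\<epsilon>>0. \<forall>\<delta>>0. {n. measure M {s \<in> space M. dist (X n s) (Y s) > r + \<epsilon>} > \<delta>} \<in> I)"

definition I_LIM_r :: "'a measure \<Rightarrow> nat set set \<Rightarrow> (nat \<Rightarrow> 'a \<Rightarrow> 'b::metric_space) \<Rightarrow> real \<Rightarrow> ('a \<Rightarrow> 'b) set" where
  "I_LIM_r M I X r = {Y \<in> rvs M. rough_I_conv_prob M I X r Y}"

definition theta_bar :: "'a measure \<Rightarrow> real \<Rightarrow> ('a \<Rightarrow> 'b::metric_space) \<Rightarrow> ('a \<Rightarrow> 'b) set" where
  "theta_bar M r X = {Y \<in> rvs M. measure M {s \<in> space M. dist (X s) (Y s) \<ge> r} = 0}"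

definition B_bar :: "'a measure \<Rightarrow> real \<Rightarrow> ('a \<Rightarrow> 'b::metric_space) \<Rightarrow> ('a \<Rightarrow> 'b) set" where
  "B_bar M r X = {Y \<in> rvs M. ky_fan M X Y \<le> r}"

end

theory Submission
  imports Defs
begin

text \<open>Both inclusions follow from the triangle inequality for the distances together with
  subadditivity of the measure. If \<open>d(X\<^sub>*, Y) < r\<close> almost surely, then
  \<open>d(X\<^sub>n, Y) > r + \<epsilon>\<close> forces \<open>d(X\<^sub>n, X\<^sub>*) > \<epsilon>\<close> up to a null set, so the exceptional index
  sets for \<open>Y\<close> lie inside those for \<open>X\<^sub>*\<close>. Conversely, if \<open>X\<^sub>n\<close> converges to \<open>Y\<close> with roughness \<open>r\<close>, the
  exceptional index sets for \<open>X\<^sub>*\<close> and \<open>Y\<close> cannot cover \<open>\<nat>\<close> because \<open>\<nat> \<notin> \<I>\<close>, so some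
  single index \<open>n\<close> is good for both; passing through \<open>X\<^sub>n\<close> shows \<open>\<P>(d(X\<^sub>*, Y) > r + h) = 0\<close> for every
  \<open>h > 0\<close>, whence \<open>\<rho>(X\<^sub>*, Y) \<le> r\<close>.\<close>

lemma ideal_on_nat_subset: "ideal_on_nat I \<Longrightarrow> A \<in> I \<Longrightarrow> B \<subseteq> A \<Longrightarrow> B \<in> I"
  unfolding ideal_on_nat_def by blast

lemma ideal_on_nat_Un_neq_UNIV:
  assumes "ideal_on_nat I" "UNIV \<notin> I" "A \<in> I" "B \<in> I"
  shows "A \<union> B \<noteq> UNIV"
proof -
  have "A \<union> B \<in> I" using assms(1,3,4) unfolding ideal_on_nat_def by blast
  then show ?thesis using assms(2) by auto
qed

lemma rough_I_conv_probD:
  "rough_I_conv_prob M I X r Y \<Longrightarrow> \<epsilon> > 0 \<Longrightarrow> \<delta> > 0 \<Longrightarrow>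
    {n. measure M {s \<in> space M. dist (X n s) (Y s) > r + \<epsilon>} > \<delta>} \<in> I"
  unfolding rough_I_conv_prob_def by blast

lemma (in finite_measure) measure_dist_gt_triangle:
  fixes A B C :: "'a \<Rightarrow> 'b::{metric_space, second_countable_topology}"
  assumes [measurable]: "A \<in> borel_measurable M" "B \<in> borel_measurable M" "C \<in> borel_measurable M"
  shows "measure M {s \<in> space M. dist (A s) (C s) > a + b}
    \<le> measure M {s \<in> space M. dist (A s) (B s) > a} + measure M {s \<in> space M. dist (B s) (C s) > b}"
proof -
  let ?AB = "{s \<in> space M. dist (A s) (B s) > a}" and ?BC = "{s \<in> space M. dist (B s) (C s) > b}"
  have "{s \<in> space M. dist (A s) (C s) > a + b} \<subseteq> ?AB \<union> ?BC"
  proof safe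
    fix s assume "a + b < dist (A s) (C s)" "\<not> b < dist (B s) (C s)"
    then show "a < dist (A s) (B s)" using dist_triangle[of "A s" "C s" "B s"] by linarith
  qed
  then have "measure M {s \<in> space M. dist (A s) (C s) > a + b} \<le> measure M (?AB \<union> ?BC)"
    by (intro finite_measure_mono) measurable
  also have "\<dots> \<le> measure M ?AB + measure M ?BC"
    by (intro measure_Un_le) measurable
  finally show ?thesis .
qed

lemma (in finite_measure) rough_I_conv_prob_AE_close:
  fixes X :: "nat \<Rightarrow> 'a \<Rightarrow> 'b::{metric_space, second_countable_topology}"
  assumes "ideal_on_nat I"
    and "\<And>n. X n \<in> borel_measurable M" "Y \<in> borel_measurable M" "Z \<in> borel_measurable M"
    and conv: "rough_I_conv_prob M I X q Y"
    and close: "measure M {s \<in> space M. dist (Y s) (Z s) > r} = 0"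
  shows "rough_I_conv_prob M I X (r + q) Z"
  unfolding rough_I_conv_prob_def
proof (intro allI impI)
  fix \<epsilon> \<delta> :: real assume "\<epsilon> > 0" "\<delta> > 0"
  have "measure M {s \<in> space M. dist (X n s) (Z s) > r + q + \<epsilon>}
      \<le> measure M {s \<in> space M. dist (X n s) (Y s) > q + \<epsilon>}" for n
    using measure_dist_gt_triangle[of "X n" Y Z "q + \<epsilon>" r] assms(2-4) close
    by (simp add: add.commute add.left_commute)
  then have "{n. measure M {s \<in> space M. dist (X n s) (Z s) > r + q + \<epsilon>} > \<delta>}
      \<subseteq> {n. measure M {s \<in> space M. dist (X n s) (Y s) > q + \<epsilon>} > \<delta>}"
    by (auto intro: less_le_trans)
  then show "{n. measure M {s \<in> space M. dist (X n s) (Z s) > r + q + \<epsilon>} > \<delta>} \<in> I"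
    using ideal_on_nat_subset[OF \<open>ideal_on_nat I\<close> rough_I_conv_probD[OF conv]] \<open>\<epsilon> > 0\<close> \<open>\<delta> > 0\<close>
    by blast
qed

lemma (in finite_measure) rough_I_conv_prob_limits_close:
  fixes X :: "nat \<Rightarrow> 'a \<Rightarrow> 'b::{metric_space, second_countable_topology}"
  assumes I: "ideal_on_nat I" "UNIV \<notin> I"
    and meas: "\<And>n. X n \<in> borel_measurable M" "Y \<in> borel_measurable M" "Z \<in> borel_measurable M"
    and convY: "rough_I_conv_prob M I X q Y" and convZ: "rough_I_conv_prob M I X r Z"
    and "h > 0"
  shows "measure M {s \<in> space M. dist (Y s) (Z s) > q + r + h} = 0"
proof -
  let ?\<mu> = "measure M {s \<in> space M. dist (Y s) (Z s) > q + r + h}"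
  have bound: "?\<mu> \<le> 2 * \<delta>" if "\<delta> > 0" for \<delta>
  proof -
    let ?badY = "{n. measure M {s \<in> space M. dist (X n s) (Y s) > q + h / 2} > \<delta>}"
    let ?badZ = "{n. measure M {s \<in> space M. dist (X n s) (Z s) > r + h / 2} > \<delta>}"
    have "?badY \<union> ?badZ \<noteq> UNIV"
      using ideal_on_nat_Un_neq_UNIV[OF I rough_I_conv_probD[OF convY] rough_I_conv_probD[OF convZ]]
        \<open>h > 0\<close> \<open>\<delta> > 0\<close> by simp
    then obtain n where "n \<notin> ?badY" "n \<notin> ?badZ" by blast
    moreover have "q + h / 2 + (r + h / 2) = q + r + h" by simp
    then have "?\<mu> \<le> measure M {s \<in> space M. dist (Y s) (X n s) > q + h / 2}
        + measure M {s \<in> space M. dist (X n s) (Z s) > r + h / 2}"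
      using measure_dist_gt_triangle[OF meas(2) meas(1)[of n] meas(3), of "q + h / 2" "r + h / 2"] by (simp only:)
    ultimately show ?thesis by (simp add: dist_commute)
  qed
  have "?\<mu> \<le> 0"
    by (rule field_le_epsilon) (use bound[of "_ / 2"] in simp)
  then show ?thesis by (simp add: measure_le_0_iff)
qed

lemma ky_fan_le:
  assumes "r \<ge> 0" and null: "\<And>e. e > r \<Longrightarrow> measure M {s \<in> space M. dist (X s) (Y s) > e} = 0"
  shows "ky_fan M X Y \<le> r"
proof (rule field_le_epsilon)
  fix h :: real assume "h > 0"
  let ?E = "{e. e > 0 \<and> measure M {s \<in> space M. dist (X s) (Y s) > e} \<le> e}"
  have "r + h \<in> ?E" using \<open>r \<ge> 0\<close> \<open>h > 0\<close> null[of "r + h"] by simp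
  moreover have "bdd_below ?E" by (rule bdd_belowI[of _ 0]) auto
  ultimately show "ky_fan M X Y \<le> r + h" unfolding ky_fan_def by (rule cInf_lower)
qed

theorem theorem2p3:
  fixes M :: "'a measure" and I :: "nat set set"
    and X :: "nat \<Rightarrow> 'a \<Rightarrow> 'b::{metric_space, second_countable_topology}"
    and Xs :: "'a \<Rightarrow> 'b" and r :: real
  assumes "prob_space M"
    and "ideal_on_nat I" and "UNIV \<notin> I"
    and "\<And>n. X n \<in> rvs M" and "Xs \<in> rvs M"
    and "rough_I_conv_prob M I X 0 Xs"
    and "r \<ge> 0"
  shows "theta_bar M r Xs \<subseteq> I_LIM_r M I X r \<and> I_LIM_r M I X r \<subseteq> B_bar M r Xs"
proof
  interpret prob_space M by fact
  have meas [measurable]: "\<And>n. X n \<in> borel_measurable M" "Xs \<in> borel_measurable M"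
    using assms(4,5) by (simp_all add: rvs_def)
  show "theta_bar M r Xs \<subseteq> I_LIM_r M I X r"
  proof
    fix Y assume "Y \<in> theta_bar M r Xs"
    then have [measurable]: "Y \<in> borel_measurable M"
      and null: "measure M {s \<in> space M. dist (Xs s) (Y s) \<ge> r} = 0"
      by (auto simp: theta_bar_def rvs_def)
    have "measure M {s \<in> space M. dist (Xs s) (Y s) > r}
        \<le> measure M {s \<in> space M. dist (Xs s) (Y s) \<ge> r}"
      by (intro finite_measure_mono) (auto, measurable)
    then have "measure M {s \<in> space M. dist (Xs s) (Y s) > r} = 0"
      using null by (simp add: measure_le_0_iff)
    then have "rough_I_conv_prob M I X (r + 0) Y"
      using assms(2,6) by (intro rough_I_conv_prob_AE_close) auto
    then show "Y \<in> I_LIM_r M I X r"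
      using \<open>Y \<in> borel_measurable M\<close> by (simp add: I_LIM_r_def rvs_def)
  qed
  show "I_LIM_r M I X r \<subseteq> B_bar M r Xs"
  proof
    fix Y assume "Y \<in> I_LIM_r M I X r"
    then have "Y \<in> borel_measurable M" "rough_I_conv_prob M I X r Y"
      by (auto simp: I_LIM_r_def rvs_def)
    have "measure M {s \<in> space M. dist (Xs s) (Y s) > e} = 0" if "e > r" for e
      using rough_I_conv_prob_limits_close[OF assms(2,3) meas \<open>Y \<in> borel_measurable M\<close> assms(6)
          \<open>rough_I_conv_prob M I X r Y\<close>, of "e - r"] that
      by simp
    then have "ky_fan M Xs Y \<le> r" by (rule ky_fan_le[OF assms(7)])
    then show "Y \<in> B_bar M r Xs" using \<open>Y \<in> borel_measurable M\<close> by (simp add: B_bar_def rvs_def)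
  qed
qed

end
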